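(* Let $n\ge2$, let $x_1=0$ and let $x_2,\dots,x_n$ be arbitrary real numbers. Then for every $\alpha>0$, $$\frac{\sum_{i=1}^n x_ie^{-\alpha x_i}}{\sum_{j=1}^n e^{-\alpha x_j}}\le\frac{\ln n}{\alpha}.$$ *)

theory Defs
  imports Complex_Main
begin

end

theory Submission
  imports Defs
begin

text \<open>With Gibbs weights \<open>w\<^sub>i = exp (- y\<^sub>i)\<close> and partition function \<open>Z = \<Sum> w\<^sub>i\<close>, applying
  \<open>ln t \<le> t - 1\<close> to \<open>t = Z / (n w\<^sub>i)\<close> and summing gives \<open>\<Sum> w\<^sub>i y\<^sub>i \<le> Z (ln n - ln Z)\<close>:
  the Gibbs average of \<open>y\<close> is at most \<open>ln n - ln Z\<close>. For \<open>y\<^sub>i = \<alpha> x\<^sub>i\<close> with \<open>x\<^sub>1 = 0\<close>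
  the term \<open>w\<^sub>1 = 1\<close> forces \<open>Z \<ge> 1\<close>, so \<open>ln Z \<ge> 0\<close> can be dropped.\<close>

lemma mult_ln_ratio_le:
  fixes w Z N :: real
  assumes "w > 0" "Z > 0" "N > 0"
  shows "w * ln (Z / (N * w)) \<le> Z / N - w"
proof -
  have "ln (Z / (N * w)) \<le> Z / (N * w) - 1"
    using assms by (intro ln_le_minus_one) simp
  then have "w * ln (Z / (N * w)) \<le> w * (Z / (N * w) - 1)"
    using assms(1) by (simp add: mult_left_mono)
  also have "\<dots> = Z / N - w"
    using assms by (simp add: field_simps)
  finally show ?thesis .
qed

lemma sum_mult_exp_neg_le_ln_card:
  fixes y :: "'a \<Rightarrow> real"
  assumes "finite A" "A \<noteq> {}"
  defines "Z \<equiv> \<Sum>i\<in>A. exp (- y i)"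
  shows "(\<Sum>i\<in>A. y i * exp (- y i)) \<le> Z * (ln (card A) - ln Z)"
proof -
  have Z_pos: "Z > 0"
    unfolding Z_def using assms(1,2) by (intro sum_pos) auto
  have card_pos: "real (card A) > 0"
    using assms(1,2) by (simp add: card_gt_0_iff)
  have ln_ratio: "ln (Z / (card A * exp (- y i))) = y i + ln Z - ln (card A)" for i
    using Z_pos card_pos by (simp add: ln_div ln_mult)
  have "(\<Sum>i\<in>A. exp (- y i) * (y i + ln Z - ln (card A)))
        \<le> (\<Sum>i\<in>A. Z / card A - exp (- y i))"
  proof (rule sum_mono)
    fix i
    show "exp (- y i) * (y i + ln Z - ln (card A)) \<le> Z / card A - exp (- y i)"
      using mult_ln_ratio_le[OF exp_gt_zero Z_pos card_pos, of "- y i"] by (simp only: ln_ratio)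
  qed
  also have "\<dots> = 0"
    using card_pos by (simp add: sum_subtractf Z_def)
  finally have "(\<Sum>i\<in>A. exp (- y i) * (y i + ln Z - ln (card A))) \<le> 0" .
  moreover have "(\<Sum>i\<in>A. exp (- y i) * (y i + ln Z - ln (card A)))
      = (\<Sum>i\<in>A. y i * exp (- y i)) + Z * (ln Z - ln (card A))"
    unfolding Z_def[symmetric] add_diff_eq[symmetric] distrib_left sum.distrib
    by (simp add: sum_distrib_right[symmetric] mult.commute Z_def)
  ultimately show ?thesis
    by (simp add: algebra_simps)
qed

theorem lemma4:
  fixes n :: nat and x :: "nat \<Rightarrow> real" and \<alpha> :: real
  assumes "n \<ge> 2" and "x 1 = 0" and "\<alpha> > 0"
  shows "(\<Sum>i=1..n. x i * exp (- \<alpha> * x i)) / (\<Sum>j=1..n. exp (- \<alpha> * x j)) \<le> ln (real n) / \<alpha>"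
proof -
  define Z where "Z = (\<Sum>j=1..n. exp (- \<alpha> * x j))"
  have "1 = exp (- \<alpha> * x 1)"
    using assms(2) by simp
  also have "\<dots> \<le> Z"
    unfolding Z_def using assms(1) by (intro member_le_sum) auto
  finally have Z_ge_1: "Z \<ge> 1" .
  have "(\<Sum>i=1..n. \<alpha> * x i * exp (- (\<alpha> * x i))) \<le> Z * (ln n - ln Z)"
    using sum_mult_exp_neg_le_ln_card[of "{1..n}" "\<lambda>i. \<alpha> * x i"] assms(1)
    by (simp add: Z_def)
  also have "\<dots> \<le> Z * ln n"
    using Z_ge_1 by (simp add: mult_left_mono)
  finally have "\<alpha> * (\<Sum>i=1..n. x i * exp (- \<alpha> * x i)) \<le> Z * ln n"
    by (simp add: sum_distrib_left mult.assoc)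
  then show ?thesis
    using Z_ge_1 assms(3) unfolding Z_def[symmetric] by (simp add: divide_simps mult.commute)
qed

end
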